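(* (i) Every instance of the Balancing with Friendship game with $m$ machines is $\left(2-\frac1m,0\right)$-semi-smooth. Consequently its price of total anarchy is at most $2-\frac1m$. (ii) The bound is tight. For every $m\ge1$, take $n=m^2$ and let $G$ consist of $m$ vertex-disjoint cliques of size $m$. Let $\vec s$ be the state in which the $m$ members of each clique are placed on $m$ distinct machines, so that each machine receives exactly one member of each clique. Then $\vec s$ is a pure Nash equilibrium with $c(\vec s)=\left(2-\frac1m\right)c(\vec s^* )$.
   Context: An instance of the Balancing with Friendship (BwF) game consists of: - players $N=\{1,\dots,n\}$; - machines $M=\{1,\dots,m\}$; - a simple undirected graph $G=(N,E)$ (the friendship graph). A state is $\vec s\in M^n$. Let $X_k(\vec s)=\{i:s_i=k\}$ and $x_k(\vec s)=|X_k(\vec s)|$. The cost of player $i$ with $s_i=k$ is $x_k(\vec s)$ plus the number of neighbours of $i$ in $G$ not on machine $k$. The social cost is $c(\vec s)=\sum_ic_i(\vec s)$, and $\vec s^*$ minimizes $c$. A cost-minimization game is $(\lambda,\mu)$-semi-smooth if there exist probability distributions $\sigma_i$ over each player's strategies such that for every state $\vec s$, $$\sum_i\mathbf E_{s_i'\sim\sigma_i}[c_i(s_i',\vec s_{-i})]\le\lambda c(\vec s^* )+\mu c(\vec s).$$ A coarse correlated equilibrium (CCE) is a distribution $\sigma$ over states such that for every player $i$ and machine $s_i'$, $$\mathbf E_{\vec s\sim\sigma}[c_i(\vec s)]\le\mathbf E_{\vec s\sim\sigma}[c_i(s_i',\vec s_{-i})].$$ The price of total anarchy is $\sup_\sigma\mathbf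 E_{\vec s\sim\sigma}[c(\vec s)]/c(\vec s^* )$ over all CCE $\sigma$. *)

theory Defs
  imports "HOL-Probability.Probability"
begin

text \<open>Players are 0,...,n-1, machines are 0,...,m-1.
  The friendship graph is given by an edge relation E on the players.\<close>

definition bwf_states :: "nat \<Rightarrow> nat \<Rightarrow> (nat \<Rightarrow> nat) set" where
  "bwf_states n m = PiE {..<n} (\<lambda>_. {..<m})"

definition simple_graph_on :: "nat \<Rightarrow> (nat \<Rightarrow> nat \<Rightarrow> bool) \<Rightarrow> bool" where
  "simple_graph_on n E \<longleftrightarrow> (\<forall>i<n. \<forall>j<n. E i j \<longrightarrow> E j i) \<and> (\<forall>i<n. \<not> E i i)"

definition bwf_load :: "nat \<Rightarrow> (nat \<Rightarrow> nat) \<Rightarrow> nat \<Rightarrow> nat" where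
  "bwf_load n s k = card {j \<in> {..<n}. s j = k}"

definition bwf_cost :: "nat \<Rightarrow> (nat \<Rightarrow> nat \<Rightarrow> bool) \<Rightarrow> (nat \<Rightarrow> nat) \<Rightarrow> nat \<Rightarrow> nat" where
  "bwf_cost n E s i = bwf_load n s (s i) + card {j \<in> {..<n}. E i j \<and> s j \<noteq> s i}"

definition bwf_social_cost :: "nat \<Rightarrow> (nat \<Rightarrow> nat \<Rightarrow> bool) \<Rightarrow> (nat \<Rightarrow> nat) \<Rightarrow> nat" where
  "bwf_social_cost n E s = (\<Sum>i<n. bwf_cost n E s i)"

definition bwf_opt :: "nat \<Rightarrow> nat \<Rightarrow> (nat \<Rightarrow> nat \<Rightarrow> bool) \<Rightarrow> nat" where
  "bwf_opt n m E = Min (bwf_social_cost n E ` bwf_states n m)"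

definition bwf_semi_smooth ::
  "nat \<Rightarrow> nat \<Rightarrow> (nat \<Rightarrow> nat \<Rightarrow> bool) \<Rightarrow> real \<Rightarrow> real \<Rightarrow> bool" where
  "bwf_semi_smooth n m E lam mu \<longleftrightarrow>
     (\<exists>\<sigma> :: nat \<Rightarrow> nat pmf. (\<forall>i<n. set_pmf (\<sigma> i) \<subseteq> {..<m}) \<and>
        (\<forall>s \<in> bwf_states n m.
           (\<Sum>i<n. measure_pmf.expectation (\<sigma> i) (\<lambda>k. real (bwf_cost n E (s(i := k)) i)))
             \<le> lam * real (bwf_opt n m E) + mu * real (bwf_social_cost n E s)))"

definition bwf_CCE :: "nat \<Rightarrow> nat \<Rightarrow> (nat \<Rightarrow> nat \<Rightarrow> bool) \<Rightarrow> (nat \<Rightarrow> nat) pmf \<Rightarrow> bool" where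
  "bwf_CCE n m E \<sigma> \<longleftrightarrow> set_pmf \<sigma> \<subseteq> bwf_states n m \<and>
     (\<forall>i<n. \<forall>k<m.
        measure_pmf.expectation \<sigma> (\<lambda>s. real (bwf_cost n E s i))
          \<le> measure_pmf.expectation \<sigma> (\<lambda>s. real (bwf_cost n E (s(i := k)) i)))"

definition bwf_pure_NE :: "nat \<Rightarrow> nat \<Rightarrow> (nat \<Rightarrow> nat \<Rightarrow> bool) \<Rightarrow> (nat \<Rightarrow> nat) \<Rightarrow> bool" where
  "bwf_pure_NE n m E s \<longleftrightarrow> s \<in> bwf_states n m \<and>
     (\<forall>i<n. \<forall>k<m. bwf_cost n E s i \<le> bwf_cost n E (s(i := k)) i)"

text \<open>m vertex-disjoint cliques of size m on players 0..m^2-1: clique c = {c*m,...,c*m+m-1}\<close>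
definition clique_graph :: "nat \<Rightarrow> nat \<Rightarrow> nat \<Rightarrow> bool" where
  "clique_graph m i j \<longleftrightarrow> i < m^2 \<and> j < m^2 \<and> i \<noteq> j \<and> i div m = j div m"

end

theory Submission
  imports Defs
begin

text \<open>Let every player deviate to a uniformly random machine. In any state, the deviation costs summed
  over players and machines equal \<open>n\<^sup>2 + (m - 1) (n + \<Sum>\<^sub>i deg i)\<close>, whatever the state is. Both
  terms are paid for by every state \<open>t\<close>: the load part of \<open>c(t)\<close> is \<open>\<Sum>\<^sub>k x\<^sub>k\<^sup>2 \<ge> n\<^sup>2 / m\<close> by
  Cauchy--Schwarz, and every player pays at least \<open>1 + deg i\<close>. So the expected deviation cost is at most
  \<open>(2 - 1/m) c(s\<^sup>*)\<close>, and the usual smoothness argument carries the bound over to coarse correlated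
  equilibria. In the clique instance every player pays \<open>2m - 1\<close> on every machine, while putting each
  clique on a machine of its own costs \<open>m\<close> per player, which is optimal by the same Cauchy--Schwarz
  bound.\<close>

lemma bwf_states_range: "s \<in> bwf_states n m \<Longrightarrow> j < n \<Longrightarrow> s j < m"
  unfolding bwf_states_def by auto

lemma finite_bwf_states: "finite (bwf_states n m)"
  unfolding bwf_states_def by (simp add: finite_PiE)

lemma bwf_states_nonempty: "0 < m \<Longrightarrow> bwf_states n m \<noteq> {}"
  unfolding bwf_states_def by (force simp: PiE_eq_empty_iff)

lemma bwf_opt_le: "s \<in> bwf_states n m \<Longrightarrow> bwf_opt n m E \<le> bwf_social_cost n E s"
  unfolding bwf_opt_def by (simp add: finite_bwf_states)

lemma bwf_opt_attained:
  assumes "0 < m"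
  obtains s where "s \<in> bwf_states n m" "bwf_opt n m E = bwf_social_cost n E s"
proof -
  have "bwf_opt n m E \<in> bwf_social_cost n E ` bwf_states n m"
    unfolding bwf_opt_def using assms by (simp add: finite_bwf_states bwf_states_nonempty)
  then show ?thesis using that by blast
qed

lemma sum_card_filter_swap:
  assumes "finite A" "finite B"
  shows "(\<Sum>k\<in>B. card {j\<in>A. P j k}) = (\<Sum>j\<in>A. card {k\<in>B. P j k})"
proof -
  have card_sum: "card {x\<in>X. Q x} = (\<Sum>x\<in>X. of_bool (Q x))" if "finite X" for X Q
    using that by (simp add: sum_of_bool_eq Collect_conj_eq)
  show ?thesis
    using assms by (simp only: card_sum) (rule sum.swap)
qed

lemma card_filter_split:
  "finite A \<Longrightarrow> card {x\<in>A. P x} = card {x\<in>A. P x \<and> Q x} + card {x\<in>A. P x \<and> \<not> Q x}"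
  by (subst card_Un_disjoint[symmetric]) (auto intro: arg_cong[where f = card])

lemma sum_bwf_load:
  assumes "s \<in> bwf_states n m"
  shows "(\<Sum>k<m. bwf_load n s k) = n"
proof -
  have "(\<Sum>k<m. bwf_load n s k) = (\<Sum>j<n. card {k\<in>{..<m}. s j = k})"
    unfolding bwf_load_def by (rule sum_card_filter_swap) auto
  also have "\<dots> = (\<Sum>j<n. card {s j})"
    using bwf_states_range[OF assms] by (intro sum.cong arg_cong[where f = card]) auto
  finally show ?thesis by simp
qed

lemma sum_bwf_load_of_player:
  assumes "s \<in> bwf_states n m"
  shows "(\<Sum>i<n. bwf_load n s (s i)) = (\<Sum>k<m. (bwf_load n s k)\<^sup>2)"
proof -
  have "(\<Sum>i<n. bwf_load n s (s i)) = (\<Sum>k<m. \<Sum>i\<in>{i\<in>{..<n}. s i = k}. bwf_load n s (s i))"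
    using bwf_states_range[OF assms] by (intro sum.group[symmetric]) auto
  also have "\<dots> = (\<Sum>k<m. (bwf_load n s k)\<^sup>2)"
    by (intro sum.cong) (simp_all add: bwf_load_def power2_eq_square)
  finally show ?thesis .
qed

lemma card_sq_le_bwf_social_cost:
  assumes "s \<in> bwf_states n m"
  shows "n\<^sup>2 \<le> m * bwf_social_cost n E s"
proof -
  have "real (n\<^sup>2) = (\<Sum>k<m. real (bwf_load n s k))\<^sup>2"
    by (simp flip: of_nat_sum add: sum_bwf_load[OF assms])
  also have "\<dots> \<le> m * (\<Sum>k<m. (real (bwf_load n s k))\<^sup>2)"
    using sum_squared_le_sum_of_squares[of "\<lambda>k. real (bwf_load n s k)" "{..<m}"]
    by (simp add: mult.commute)
  also have "\<dots> = real (m * (\<Sum>i<n. bwf_load n s (s i)))"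
    by (simp add: sum_bwf_load_of_player[OF assms])
  finally have "n\<^sup>2 \<le> m * (\<Sum>i<n. bwf_load n s (s i))"
    by linarith
  also have "\<dots> \<le> m * bwf_social_cost n E s"
    unfolding bwf_social_cost_def bwf_cost_def by (intro mult_le_mono2 sum_mono) simp
  finally show ?thesis .
qed

definition bwf_degree :: "nat \<Rightarrow> (nat \<Rightarrow> nat \<Rightarrow> bool) \<Rightarrow> nat \<Rightarrow> nat" where
  "bwf_degree n E i = card {j\<in>{..<n}. E i j}"

lemma bwf_degree_less_cost:
  assumes "\<not> E i i" "i < n"
  shows "bwf_degree n E i < bwf_cost n E s i"
proof -
  let ?same = "{j\<in>{..<n}. E i j \<and> s j = s i}"
  have "insert i ?same \<subseteq> {j\<in>{..<n}. s j = s i}"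
    using assms by auto
  then have "card (insert i ?same) \<le> bwf_load n s (s i)"
    unfolding bwf_load_def by (intro card_mono) auto
  moreover have "bwf_degree n E i = card ?same + card {j\<in>{..<n}. E i j \<and> s j \<noteq> s i}"
    unfolding bwf_degree_def by (rule card_filter_split) simp
  ultimately show ?thesis
    using assms unfolding bwf_cost_def by simp
qed

lemma bwf_cost_fun_upd_self:
  assumes "\<not> E i i" "i < n"
  shows "bwf_cost n E (s(i := k)) i
    = bwf_load n s k + of_bool (s i \<noteq> k) + card {j\<in>{..<n}. E i j \<and> s j \<noteq> k}"
proof -
  have "{j\<in>{..<n}. (s(i := k)) j = k} = insert i {j\<in>{..<n}. s j = k}"
    using assms by auto
  moreover have "{j\<in>{..<n}. E i j \<and> (s(i := k)) j \<noteq> k} = {j\<in>{..<n}. E i j \<and> s j \<noteq> k}"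
    using assms by auto
  ultimately show ?thesis
    using assms unfolding bwf_cost_def bwf_load_def by (simp add: card_insert_if)
qed

lemma card_lessThan_neq: "k < m \<Longrightarrow> card {k'\<in>{..<m}. k \<noteq> k'} = m - 1"
proof -
  assume "k < m"
  then have "{k'\<in>{..<m}. k \<noteq> k'} = {..<m} - {k}" by auto
  with \<open>k < m\<close> show ?thesis by simp
qed

lemma sum_bwf_cost_deviations:
  assumes "\<not> E i i" "i < n" "s \<in> bwf_states n m"
  shows "(\<Sum>k<m. bwf_cost n E (s(i := k)) i) = n + (m - 1) * Suc (bwf_degree n E i)"
proof -
  have range: "j < n \<Longrightarrow> s j < m" for j
    using bwf_states_range[OF assms(3)] .
  have "(\<Sum>k<m. of_bool (s i \<noteq> k) :: nat) = m - 1"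
    using card_lessThan_neq[OF range[OF assms(2)]] by (simp add: sum_of_bool_eq Int_def)
  moreover have "(\<Sum>k<m. card {j\<in>{..<n}. E i j \<and> s j \<noteq> k})
      = (\<Sum>j\<in>{j\<in>{..<n}. E i j}. card {k\<in>{..<m}. s j \<noteq> k})"
    using sum_card_filter_swap[of "{j\<in>{..<n}. E i j}" "{..<m}" "\<lambda>j k. s j \<noteq> k"]
    by simp
  moreover have "\<dots> = (m - 1) * bwf_degree n E i"
    unfolding bwf_degree_def using range card_lessThan_neq by simp
  ultimately show ?thesis
    using assms by (simp add: bwf_cost_fun_upd_self sum.distrib sum_bwf_load)
qed

lemma sum_bwf_cost_deviations_le:
  assumes "simple_graph_on n E" "s \<in> bwf_states n m" "t \<in> bwf_states n m"
  shows "(\<Sum>i<n. \<Sum>k<m. bwf_cost n E (s(i := k)) i) \<le> (2 * m - 1) * bwf_social_cost n E t"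
proof -
  have irrefl: "i < n \<Longrightarrow> \<not> E i i" for i
    using assms(1) unfolding simple_graph_on_def by blast
  have "(\<Sum>i<n. \<Sum>k<m. bwf_cost n E (s(i := k)) i) = n * n + (m - 1) * (\<Sum>i<n. Suc (bwf_degree n E i))"
    using assms(2) by (simp add: sum_bwf_cost_deviations irrefl sum.distrib sum_distrib_left)
  also have "\<dots> \<le> m * bwf_social_cost n E t + (m - 1) * bwf_social_cost n E t"
  proof (rule add_mono)
    show "n * n \<le> m * bwf_social_cost n E t"
      using card_sq_le_bwf_social_cost[OF assms(3)] by (simp add: power2_eq_square)
    show "(m - 1) * (\<Sum>i<n. Suc (bwf_degree n E i)) \<le> (m - 1) * bwf_social_cost n E t"
      unfolding bwf_social_cost_def
      by (intro mult_le_mono2 sum_mono) (simp add: Suc_le_eq bwf_degree_less_cost irrefl)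
  qed
  also have "\<dots> = (2 * m - 1) * bwf_social_cost n E t"
    by (cases m) simp_all
  finally show ?thesis .
qed

lemma bwf_semi_smooth_uniform:
  assumes "simple_graph_on n E" "0 < m"
  shows "bwf_semi_smooth n m E (2 - 1 / real m) 0"
  unfolding bwf_semi_smooth_def
proof (intro exI[of _ "\<lambda>_. pmf_of_set {..<m}"] conjI allI impI ballI)
  show "set_pmf (pmf_of_set {..<m}) \<subseteq> {..<m}" for i
    using assms(2) by (subst set_pmf_of_set) auto
next
  fix s assume s: "s \<in> bwf_states n m"
  obtain t where t: "t \<in> bwf_states n m" "bwf_opt n m E = bwf_social_cost n E t"
    using bwf_opt_attained[OF assms(2)] .
  have "(\<Sum>i<n. measure_pmf.expectation (pmf_of_set {..<m}) (\<lambda>k. real (bwf_cost n E (s(i := k)) i)))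
      = real (\<Sum>i<n. \<Sum>k<m. bwf_cost n E (s(i := k)) i) / real m"
    using assms(2) by (simp add: integral_pmf_of_set[of "{..<m}"] lessThan_empty_iff sum_divide_distrib)
  also have "\<dots> \<le> real ((2 * m - 1) * bwf_opt n m E) / real m"
    using sum_bwf_cost_deviations_le[OF assms(1) s t(1)] t(2) by (intro divide_right_mono of_nat_mono) auto
  also have "\<dots> = (2 - 1 / real m) * real (bwf_opt n m E)"
    using assms(2) by (simp add: of_nat_diff field_simps)
  finally show "(\<Sum>i<n. measure_pmf.expectation (pmf_of_set {..<m}) (\<lambda>k. real (bwf_cost n E (s(i := k)) i)))
      \<le> (2 - 1 / real m) * real (bwf_opt n m E) + 0 * real (bwf_social_cost n E s)"
    by simp
qed

lemma bwf_CCE_social_cost_le: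
  assumes smooth: "bwf_semi_smooth n m E lam mu" and "mu < 1" and cce: "bwf_CCE n m E \<sigma>"
  shows "measure_pmf.expectation \<sigma> (\<lambda>s. real (bwf_social_cost n E s))
    \<le> lam / (1 - mu) * real (bwf_opt n m E)"
proof -
  obtain \<tau> where \<tau>: "\<And>i. i < n \<Longrightarrow> set_pmf (\<tau> i) \<subseteq> {..<m}" and
    bound: "\<And>s. s \<in> bwf_states n m \<Longrightarrow>
      (\<Sum>i<n. measure_pmf.expectation (\<tau> i) (\<lambda>k. real (bwf_cost n E (s(i := k)) i)))
        \<le> lam * real (bwf_opt n m E) + mu * real (bwf_social_cost n E s)"
    using smooth unfolding bwf_semi_smooth_def by blast
  define S where "S = bwf_states n m"
  have S: "finite S" "set_pmf \<sigma> \<subseteq> S"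
    using cce finite_bwf_states unfolding S_def bwf_CCE_def by auto
  have E\<sigma>: "measure_pmf.expectation \<sigma> f = (\<Sum>s\<in>S. f s * pmf \<sigma> s)" for f
    using S by (intro integral_measure_pmf_real) auto
  have E\<tau>: "measure_pmf.expectation (\<tau> i) g = (\<Sum>k<m. g k * pmf (\<tau> i) k)" if "i < n" for i g
    using \<tau>[OF that] by (intro integral_measure_pmf_real) auto
  let ?dev = "\<lambda>s i. measure_pmf.expectation (\<tau> i) (\<lambda>k. real (bwf_cost n E (s(i := k)) i))"
  have player: "measure_pmf.expectation \<sigma> (\<lambda>s. real (bwf_cost n E s i))
      \<le> measure_pmf.expectation \<sigma> (\<lambda>s. ?dev s i)" if i: "i < n" for i
  proof -
    have "measure_pmf.expectation \<sigma> (\<lambda>s. real (bwf_cost n E s i))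
        = (\<Sum>k<m. measure_pmf.expectation \<sigma> (\<lambda>s. real (bwf_cost n E s i)) * pmf (\<tau> i) k)"
      using \<tau>[OF i] by (simp add: sum_pmf_eq_1 flip: sum_distrib_left)
    also have "\<dots> \<le> (\<Sum>k<m. measure_pmf.expectation \<sigma> (\<lambda>s. real (bwf_cost n E (s(i := k)) i)) * pmf (\<tau> i) k)"
      using cce i unfolding bwf_CCE_def by (intro sum_mono mult_right_mono) auto
    also have "\<dots> = measure_pmf.expectation \<sigma> (\<lambda>s. ?dev s i)"
      unfolding E\<sigma> E\<tau>[OF i] sum_distrib_right by (subst sum.swap) (simp add: mult_ac)
    finally show ?thesis .
  qed
  have "measure_pmf.expectation \<sigma> (\<lambda>s. real (bwf_social_cost n E s))
      = (\<Sum>i<n. measure_pmf.expectation \<sigma> (\<lambda>s. real (bwf_cost n E s i)))"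
    unfolding E\<sigma> bwf_social_cost_def of_nat_sum sum_distrib_right by (rule sum.swap)
  also have "\<dots> \<le> (\<Sum>i<n. measure_pmf.expectation \<sigma> (\<lambda>s. ?dev s i))"
    by (intro sum_mono player) simp
  also have "\<dots> = measure_pmf.expectation \<sigma> (\<lambda>s. \<Sum>i<n. ?dev s i)"
    unfolding E\<sigma> sum_distrib_right by (rule sum.swap)
  also have "\<dots> \<le> measure_pmf.expectation \<sigma> (\<lambda>s. lam * real (bwf_opt n m E) + mu * real (bwf_social_cost n E s))"
    unfolding E\<sigma> using bound S(2) by (intro sum_mono mult_right_mono) (auto simp: S_def)
  also have "\<dots> = lam * real (bwf_opt n m E) * (\<Sum>s\<in>S. pmf \<sigma> s)
      + mu * measure_pmf.expectation \<sigma> (\<lambda>s. real (bwf_social_cost n E s))"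
    unfolding E\<sigma> by (simp add: ring_distribs sum.distrib sum_distrib_left sum_distrib_right mult_ac)
  finally have "measure_pmf.expectation \<sigma> (\<lambda>s. real (bwf_social_cost n E s)) * (1 - mu)
      \<le> lam * real (bwf_opt n m E)"
    using S by (simp add: sum_pmf_eq_1 algebra_simps)
  then show ?thesis
    using \<open>mu < 1\<close> by (simp add: pos_le_divide_eq)
qed

lemma div_less_of_less_square: "i < m\<^sup>2 \<Longrightarrow> i div m < (m::nat)"
  by (simp add: less_mult_imp_div_less power2_eq_square)

lemma card_clique:
  assumes "c < m"
  shows "card {i\<in>{..<m\<^sup>2}. i div m = c} = m"
proof -
  have "{i\<in>{..<m\<^sup>2}. i div m = c} = {m * c..<m * c + m}"
  proof (intro equalityI subsetI)
    fix i assume "i \<in> {i\<in>{..<m\<^sup>2}. i div m = c}"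
    then have "i div m = c" by simp
    then show "i \<in> {m * c..<m * c + m}"
      using assms div_times_less_eq_dividend[of i m] div_less_iff_less_mult[of m i "Suc c"]
      by (auto simp: mult.commute)
  next
    fix i assume i: "i \<in> {m * c..<m * c + m}"
    have "m * c + m \<le> m * m"
      using assms by (metis mult_Suc_right mult_le_mono2 Suc_leI add.commute plus_1_eq_Suc)
    with i show "i \<in> {i\<in>{..<m\<^sup>2}. i div m = c}"
      by (auto simp: power2_eq_square intro: div_nat_eqI)
  qed
  then show ?thesis by simp
qed

lemma bwf_degree_clique_graph:
  assumes "i < m\<^sup>2"
  shows "bwf_degree (m\<^sup>2) (clique_graph m) i = m - 1"
proof -
  have "{j\<in>{..<m\<^sup>2}. clique_graph m i j} = {j\<in>{..<m\<^sup>2}. j div m = i div m} - {i}"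
    using assms by (auto simp: clique_graph_def)
  then show ?thesis
    using assms card_clique[OF div_less_of_less_square[OF assms]] unfolding bwf_degree_def by simp
qed

lemma bwf_opt_clique_graph:
  assumes "0 < m"
  shows "bwf_opt (m\<^sup>2) m (clique_graph m) = m ^ 3"
proof (rule antisym)
  define t where "t = restrict (\<lambda>i. i div m) {..<m\<^sup>2}"
  have t: "t \<in> bwf_states (m\<^sup>2) m"
    unfolding t_def bwf_states_def by (simp add: restrict_PiE_iff div_less_of_less_square)
  have "bwf_cost (m\<^sup>2) (clique_graph m) t i = m" if "i < m\<^sup>2" for i
  proof -
    have "{j\<in>{..<m\<^sup>2}. clique_graph m i j \<and> t j \<noteq> t i} = {}"
      by (auto simp: t_def clique_graph_def)
    moreover have "{j\<in>{..<m\<^sup>2}. t j = t i} = {j\<in>{..<m\<^sup>2}. j div m = i div m}"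
      using that by (auto simp: t_def)
    ultimately show ?thesis
      using card_clique[OF div_less_of_less_square[OF that]] unfolding bwf_cost_def bwf_load_def by simp
  qed
  then have "bwf_social_cost (m\<^sup>2) (clique_graph m) t = m ^ 3"
    unfolding bwf_social_cost_def by (simp add: power2_eq_square power3_eq_cube)
  then show "bwf_opt (m\<^sup>2) m (clique_graph m) \<le> m ^ 3"
    using bwf_opt_le[OF t, of "clique_graph m"] by simp
next
  obtain u where u: "u \<in> bwf_states (m\<^sup>2) m" "bwf_opt (m\<^sup>2) m (clique_graph m) = bwf_social_cost (m\<^sup>2) (clique_graph m) u"
    using bwf_opt_attained[OF assms] .
  have "m * m ^ 3 \<le> m * bwf_opt (m\<^sup>2) m (clique_graph m)"
    using card_sq_le_bwf_social_cost[OF u(1)] u(2) by (simp add: power2_eq_square power3_eq_cube mult_ac)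
  then show "m ^ 3 \<le> bwf_opt (m\<^sup>2) m (clique_graph m)"
    using assms by simp
qed

context
  fixes m :: nat and s :: "nat \<Rightarrow> nat"
  assumes s: "s \<in> bwf_states (m\<^sup>2) m"
    and latin: "\<forall>c<m. \<forall>k<m. card {i\<in>{..<m\<^sup>2}. i div m = c \<and> s i = k} = 1"
begin

lemma latin_machine_load:
  assumes "k < m"
  shows "bwf_load (m\<^sup>2) s k = m"
proof -
  have "bwf_load (m\<^sup>2) s k = card (\<Union>c<m. {i\<in>{..<m\<^sup>2}. i div m = c \<and> s i = k})"
    unfolding bwf_load_def using div_less_of_less_square by (intro arg_cong[where f = card]) auto
  also have "\<dots> = (\<Sum>c<m. card {i\<in>{..<m\<^sup>2}. i div m = c \<and> s i = k})"
    by (rule card_UN_disjoint) auto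
  also have "\<dots> = m"
    using latin assms by simp
  finally show ?thesis .
qed

lemma latin_friends_on_machine:
  assumes "i < m\<^sup>2" "k < m"
  shows "card {j\<in>{..<m\<^sup>2}. clique_graph m i j \<and> s j = k} = of_bool (s i \<noteq> k)"
proof -
  let ?cell = "{j\<in>{..<m\<^sup>2}. j div m = i div m \<and> s j = k}"
  have "{j\<in>{..<m\<^sup>2}. clique_graph m i j \<and> s j = k} = ?cell - {i}"
    using assms(1) by (auto simp: clique_graph_def)
  moreover have "card ?cell = 1"
    using latin assms div_less_of_less_square by blast
  ultimately show ?thesis
    using assms(1) by (simp add: card_Diff_singleton_if)
qed

lemma latin_deviation_cost:
  assumes "i < m\<^sup>2" "k < m"
  shows "bwf_cost (m\<^sup>2) (clique_graph m) (s(i := k)) i = 2 * m - 1"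
proof -
  have "card {j\<in>{..<m\<^sup>2}. clique_graph m i j \<and> s j \<noteq> k} = m - 1 - of_bool (s i \<noteq> k)"
    using card_filter_split[of "{..<m\<^sup>2}" "clique_graph m i" "\<lambda>j. s j = k"]
      latin_friends_on_machine[OF assms] bwf_degree_clique_graph[OF assms(1)]
    unfolding bwf_degree_def by simp
  moreover have "s i \<noteq> k \<Longrightarrow> 2 \<le> m"
    using assms bwf_states_range[OF s assms(1)] by linarith
  ultimately show ?thesis
    using assms by (auto simp: bwf_cost_fun_upd_self clique_graph_def latin_machine_load)
qed

lemma latin_cost:
  assumes "i < m\<^sup>2"
  shows "bwf_cost (m\<^sup>2) (clique_graph m) s i = 2 * m - 1"
  using latin_deviation_cost[OF assms bwf_states_range[OF s assms]] by simp

lemma latin_pure_NE: "bwf_pure_NE (m\<^sup>2) m (clique_graph m) s"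
  unfolding bwf_pure_NE_def using s by (simp add: latin_cost latin_deviation_cost)

lemma latin_social_cost:
  assumes "0 < m"
  shows "real (bwf_social_cost (m\<^sup>2) (clique_graph m) s)
    = (2 - 1 / real m) * real (bwf_opt (m\<^sup>2) m (clique_graph m))"
proof -
  have "bwf_social_cost (m\<^sup>2) (clique_graph m) s = m\<^sup>2 * (2 * m - 1)"
    unfolding bwf_social_cost_def by (simp add: latin_cost)
  then show ?thesis
    unfolding bwf_opt_clique_graph[OF assms]
    using assms by (simp add: of_nat_diff power2_eq_square power3_eq_cube field_simps)
qed

end

theorem theorem10:
  shows "(\<forall>n m E. m \<ge> 1 \<longrightarrow> simple_graph_on n E \<longrightarrow>
            bwf_semi_smooth n m E (2 - 1 / real m) 0 \<and>
            (\<forall>\<sigma>. bwf_CCE n m E \<sigma> \<longrightarrow>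
               measure_pmf.expectation \<sigma> (\<lambda>s. real (bwf_social_cost n E s))
                 \<le> (2 - 1 / real m) * real (bwf_opt n m E)))
       \<and>
         (\<forall>m. m \<ge> 1 \<longrightarrow>
            (\<forall>s \<in> bwf_states (m^2) m.
               (\<forall>c<m. \<forall>k<m. card {i \<in> {..<m^2}. i div m = c \<and> s i = k} = 1) \<longrightarrow>
               bwf_pure_NE (m^2) m (clique_graph m) s \<and>
               real (bwf_social_cost (m^2) (clique_graph m) s)
                 = (2 - 1 / real m) * real (bwf_opt (m^2) m (clique_graph m))))"
proof (intro conjI allI impI ballI)
  fix n m :: nat and E assume "1 \<le> m" "simple_graph_on n E"
  then show smooth: "bwf_semi_smooth n m E (2 - 1 / real m) 0"
    by (simp add: bwf_semi_smooth_uniform)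
  fix \<sigma> assume "bwf_CCE n m E \<sigma>"
  from bwf_CCE_social_cost_le[OF smooth _ this]
  show "measure_pmf.expectation \<sigma> (\<lambda>s. real (bwf_social_cost n E s)) \<le> (2 - 1 / real m) * real (bwf_opt n m E)"
    by simp
next
  fix m :: nat and s assume "1 \<le> m" "s \<in> bwf_states (m\<^sup>2) m"
    "\<forall>c<m. \<forall>k<m. card {i\<in>{..<m\<^sup>2}. i div m = c \<and> s i = k} = 1"
  then show "bwf_pure_NE (m\<^sup>2) m (clique_graph m) s"
    and "real (bwf_social_cost (m\<^sup>2) (clique_graph m) s)
      = (2 - 1 / real m) * real (bwf_opt (m\<^sup>2) m (clique_graph m))"
    by (simp_all add: latin_pure_NE latin_social_cost)
qed

end
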